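(* Let $\mathcal{M}=(S,E,T)$ be a trivially parametric Markov chain satisfying the standing assumptions below, and let $\{S_0,\dots,S_m\}$ be an equivalence partition of $\mathcal{M}$. Then there exists a graph-preserving valuation $\mathsf{val}$ such that for all $0\le i<j\le m$, all $s_i\in S_i$ and all $s_j\in S_j$, $P_{\mathsf{val}}(s_i)<P_{\mathsf{val}}(s_j)$.
   Context: A trivially parametric Markov chain $\mathcal{M}=(S,E,T)$ consists of a finite set of states $S$, targets $T=\{\mathit{fin},\mathit{fail}\}$ with no outgoing edges, and edges $E\subseteq(S\setminus T)\times S$. A graph-preserving valuation assigns to each non-target $s$ a full-support probability distribution on its successor set $sE$; $P_{\mathsf{val}}(s)$ is the probability of reaching $\mathit{fin}$ from $s$. $s\sim s'$ iff $P_{\mathsf{val}}(s)=P_{\mathsf{val}}(s')$ for all graph-preserving valuations; $\tilde u$ is the equivalence class of $u$. An equivalence partition is a partition $\{S_0,\dots,S_m\}$ of $S$ into non-empty sets such that $S_0=\{\mathit{fail}\}$, $S_m=\{\mathit{fin}\}$, for every non-target $u$ we have $\tilde u\subseteq S_i$ for some $0<i<m$, and every $u\in S_j$ either has successors in some $S_i$ and some $S_k$ with $i<j<k$ or has all its successors in $S_j$. Standing assumptions: the equivalence classes of $\mathit{fin}$ and $\mathit{fail}$ are $\{\mathit{fin}\}$ and $\{\mathit{fail}\}$; no state has a self-loop; every non-target state has exactly two successors. *)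

theory Defs
  imports Main "HOL-Library.Extended_Real"
begin

text \<open>Trivially parametric Markov chains (S, E, T) with targets T = {fin, fail}.\<close>

definition succs :: "('a \<times> 'a) set \<Rightarrow> 'a \<Rightarrow> 'a set" where
  "succs E s = {t. (s, t) \<in> E}"

definition tpmc :: "'a set \<Rightarrow> ('a \<times> 'a) set \<Rightarrow> 'a \<Rightarrow> 'a \<Rightarrow> bool" where
  "tpmc S E fin fail \<longleftrightarrow> finite S \<and> fin \<in> S \<and> fail \<in> S \<and> fin \<noteq> fail
     \<and> E \<subseteq> (S - {fin, fail}) \<times> S"

definition graph_preserving :: "'a set \<Rightarrow> ('a \<times> 'a) set \<Rightarrow> 'a \<Rightarrow> 'a \<Rightarrow> ('a \<Rightarrow> 'a \<Rightarrow> real) \<Rightarrow> bool" where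
  "graph_preserving S E fin fail val \<longleftrightarrow>
     (\<forall>s \<in> S - {fin, fail}. (\<forall>t \<in> succs E s. val s t > 0) \<and> (\<Sum>t \<in> succs E s. val s t) = 1)"

fun reach_within :: "('a \<Rightarrow> 'a \<Rightarrow> real) \<Rightarrow> ('a \<times> 'a) set \<Rightarrow> 'a \<Rightarrow> nat \<Rightarrow> 'a \<Rightarrow> real" where
  "reach_within val E fin 0 s = (if s = fin then 1 else 0)"
| "reach_within val E fin (Suc n) s =
     (if s = fin then 1 else (\<Sum>t \<in> succs E s. val s t * reach_within val E fin n t))"

definition reach_prob :: "('a \<Rightarrow> 'a \<Rightarrow> real) \<Rightarrow> ('a \<times> 'a) set \<Rightarrow> 'a \<Rightarrow> 'a \<Rightarrow> real" where
  "reach_prob val E fin s = (SUP n. reach_within val E fin n s)"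

definition equiv_states :: "'a set \<Rightarrow> ('a \<times> 'a) set \<Rightarrow> 'a \<Rightarrow> 'a \<Rightarrow> 'a \<Rightarrow> 'a \<Rightarrow> bool" where
  "equiv_states S E fin fail s s' \<longleftrightarrow>
     (\<forall>val. graph_preserving S E fin fail val \<longrightarrow> reach_prob val E fin s = reach_prob val E fin s')"

definition eq_class :: "'a set \<Rightarrow> ('a \<times> 'a) set \<Rightarrow> 'a \<Rightarrow> 'a \<Rightarrow> 'a \<Rightarrow> 'a set" where
  "eq_class S E fin fail u = {s \<in> S. equiv_states S E fin fail s u}"

definition standing_assms :: "'a set \<Rightarrow> ('a \<times> 'a) set \<Rightarrow> 'a \<Rightarrow> 'a \<Rightarrow> bool" where
  "standing_assms S E fin fail \<longleftrightarrow>
     eq_class S E fin fail fin = {fin} \<and> eq_class S E fin fail fail = {fail}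
     \<and> (\<forall>s. (s, s) \<notin> E)
     \<and> (\<forall>s \<in> S - {fin, fail}. card (succs E s) = 2)"

definition equiv_partition :: "'a set \<Rightarrow> ('a \<times> 'a) set \<Rightarrow> 'a \<Rightarrow> 'a \<Rightarrow> (nat \<Rightarrow> 'a set) \<Rightarrow> nat \<Rightarrow> bool" where
  "equiv_partition S E fin fail Sp m \<longleftrightarrow>
     (\<forall>i \<le> m. Sp i \<noteq> {})
     \<and> (\<forall>i \<le> m. \<forall>j \<le> m. i \<noteq> j \<longrightarrow> Sp i \<inter> Sp j = {})
     \<and> (\<Union>i \<le> m. Sp i) = S
     \<and> Sp 0 = {fail} \<and> Sp m = {fin}
     \<and> (\<forall>u \<in> S - {fin, fail}. \<exists>i. 0 < i \<and> i < m \<and> eq_class S E fin fail u \<subseteq> Sp i)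
     \<and> (\<forall>j \<le> m. \<forall>u \<in> Sp j.
          (\<exists>i k. i < j \<and> j < k \<and> k \<le> m \<and> succs E u \<inter> Sp i \<noteq> {} \<and> succs E u \<inter> Sp k \<noteq> {})
          \<or> succs E u \<subseteq> Sp j)"

end

theory Submission
  imports Defs
begin

text \<open>
  Give each state of level j the value j / m. For a state whose successors lie in levels
  i < j < k, the two edge probabilities can be chosen so that this value is the weighted mean
  of the values of its successors; a state whose successors all lie in its own level takes
  the uniform distribution. The resulting valuation makes the potential harmonic, and
  harmonic functions with boundary values 1 at fin and 0 at fail coincide with the
  reachability probability: their difference attains its maximum on a set closed under
  successors, and such a set avoiding fin consists of states that are equivalent to fail,
  of which there are none besides fail itself.
\<close>

definition harmonic ::
    "'a set \<Rightarrow> ('a \<times> 'a) set \<Rightarrow> 'a \<Rightarrow> 'a \<Rightarrow> ('a \<Rightarrow> 'a \<Rightarrow> real) \<Rightarrow> ('a \<Rightarrow> real) \<Rightarrow> bool" where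
  "harmonic S E fin fail val f \<longleftrightarrow>
     (\<forall>s \<in> S - {fin, fail}. (\<Sum>t \<in> succs E s. val s t * f t) = f s)"

definition level :: "(nat \<Rightarrow> 'a set) \<Rightarrow> nat \<Rightarrow> 'a \<Rightarrow> nat" where
  "level Sp m s = (THE j. j \<le> m \<and> s \<in> Sp j)"

lemma
  assumes "tpmc S E fin fail"
  shows tpmc_succs_subset: "succs E s \<subseteq> S"
    and tpmc_succs_target: "s \<notin> S - {fin, fail} \<Longrightarrow> succs E s = {}"
  using assms unfolding tpmc_def succs_def by auto

lemma tpmc_finite_succs:
  assumes "tpmc S E fin fail"
  shows "finite (succs E s)"
  using finite_subset[OF tpmc_succs_subset[OF assms]] assms by (simp add: tpmc_def)

lemma graph_preserving_succ_pos:
  assumes "tpmc S E fin fail" "graph_preserving S E fin fail val" "t \<in> succs E s"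
  shows "0 < val s t"
proof -
  have "s \<in> S - {fin, fail}" using tpmc_succs_target[OF assms(1)] assms(3) by blast
  then show ?thesis using assms(2,3) unfolding graph_preserving_def by blast
qed

lemma harmonic_diff:
  assumes "harmonic S E fin fail val f" "harmonic S E fin fail val g"
  shows "harmonic S E fin fail val (\<lambda>s. f s - g s)"
  using assms by (simp add: harmonic_def right_diff_distrib sum_subtractf)

lemma convex_combination_eq_upper_bound:
  fixes w x :: "'a \<Rightarrow> real"
  assumes "finite A" "\<forall>t\<in>A. 0 < w t" "sum w A = 1" "\<forall>t\<in>A. x t \<le> M"
    and "(\<Sum>t\<in>A. w t * x t) = M" "t \<in> A"
  shows "x t = M"
proof -
  have "(\<Sum>t\<in>A. w t * (M - x t)) = M * sum w A - (\<Sum>t\<in>A. w t * x t)"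
    by (simp add: right_diff_distrib sum_subtractf sum_distrib_left mult.commute)
  also have "\<dots> = 0" using assms by simp
  finally have "\<forall>t\<in>A. w t * (M - x t) = 0"
    using assms by (subst sum_nonneg_eq_0_iff[symmetric]) (auto intro: less_imp_le)
  then have "w t * (M - x t) = 0" using \<open>t \<in> A\<close> by blast
  then show ?thesis using assms(2) \<open>t \<in> A\<close> by fastforce
qed

lemma exists_weights_with_mean:
  fixes f :: "'a \<Rightarrow> real"
  assumes "card A = 2"
    and "(\<exists>a\<in>A. \<exists>b\<in>A. f a < y \<and> y < f b) \<or> (\<forall>t\<in>A. f t = y)"
  shows "\<exists>w. (\<forall>t\<in>A. 0 < w t) \<and> sum w A = 1 \<and> (\<Sum>t\<in>A. w t * f t) = y"
  using assms(2)
proof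
  assume "\<exists>a\<in>A. \<exists>b\<in>A. f a < y \<and> y < f b"
  then obtain a b where ab: "a \<in> A" "b \<in> A" "f a < y" "y < f b" by blast
  then have "a \<noteq> b" by auto
  then have A: "A = {a, b}" using assms(1) ab by (auto simp: card_2_iff)
  define w where "w t = (if t = a then (f b - y) / (f b - f a) else (y - f a) / (f b - f a))" for t
  have "w a * f a + w b * f b = y"
    using ab \<open>a \<noteq> b\<close> unfolding w_def by (simp add: divide_simps) (simp add: algebra_simps)
  moreover have "w a + w b = 1"
    using ab \<open>a \<noteq> b\<close> unfolding w_def by (simp add: divide_simps)
  moreover have "0 < w a" "0 < w b"
    using ab \<open>a \<noteq> b\<close> unfolding w_def by auto
  ultimately show ?thesis using \<open>a \<noteq> b\<close> unfolding A by (intro exI[of _ w]) auto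
next
  assume "\<forall>t\<in>A. f t = y"
  then show ?thesis using assms(1) by (intro exI[of _ "\<lambda>_. 1 / 2"]) auto
qed

lemma reach_within_fin [simp]: "reach_within val E fin n fin = 1"
  by (cases n) auto

context
  fixes val :: "'a \<Rightarrow> 'a \<Rightarrow> real" and E :: "('a \<times> 'a) set"
  assumes nonneg: "\<And>s t. t \<in> succs E s \<Longrightarrow> 0 \<le> val s t"
begin

lemma reach_within_nonneg: "0 \<le> reach_within val E fin n s"
  by (induction n arbitrary: s) (auto intro!: sum_nonneg mult_nonneg_nonneg nonneg)

lemma incseq_reach_within: "incseq (\<lambda>n. reach_within val E fin n s)"
proof (rule incseq_SucI)
  show "reach_within val E fin n s \<le> reach_within val E fin (Suc n) s" for n
    by (induction n arbitrary: s)
      (auto intro!: sum_nonneg sum_mono mult_nonneg_nonneg mult_left_mono nonneg reach_within_nonneg)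
qed

lemma reach_within_le_superharmonic:
  fixes f :: "'a \<Rightarrow> real"
  assumes tp: "tpmc S E fin fail" and "1 \<le> f fin" and "\<forall>s\<in>S. 0 \<le> f s"
    and super: "\<And>s. s \<in> S - {fin, fail} \<Longrightarrow> (\<Sum>t\<in>succs E s. val s t * f t) \<le> f s"
  shows "s \<in> S \<Longrightarrow> reach_within val E fin n s \<le> f s"
proof (induction n arbitrary: s)
  case 0
  then show ?case using assms by auto
next
  case (Suc n)
  show ?case
  proof (cases "s \<in> S - {fin, fail}")
    case True
    then have "reach_within val E fin (Suc n) s = (\<Sum>t\<in>succs E s. val s t * reach_within val E fin n t)"
      by auto
    also have "\<dots> \<le> (\<Sum>t\<in>succs E s. val s t * f t)"
      using Suc.IH tpmc_succs_subset[OF tp] by (intro sum_mono mult_left_mono nonneg) auto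
    finally show ?thesis using super[OF True] by linarith
  qed (use Suc.prems assms tpmc_succs_target[OF tp] in auto)
qed

end

lemma closed_reach_within_eq_0:
  assumes "\<forall>s\<in>C. succs E s \<subseteq> C" "fin \<notin> C" "s \<in> C"
  shows "reach_within val E fin n s = 0"
  using assms(3)
proof (induction n arbitrary: s)
  case (Suc n)
  then have "\<forall>t\<in>succs E s. reach_within val E fin n t = 0" using assms(1) by blast
  then show ?case using Suc.prems assms(2) by (auto intro: sum.neutral)
qed (use assms(2) in auto)

lemma closed_reach_prob_eq_0:
  assumes "\<forall>s\<in>C. succs E s \<subseteq> C" "fin \<notin> C" "s \<in> C"
  shows "reach_prob val E fin s = 0"
  unfolding reach_prob_def closed_reach_within_eq_0[OF assms] by simp

lemma reach_prob_fin: "reach_prob val E fin fin = 1"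
  by (simp add: reach_prob_def)

lemma reach_prob_fail:
  assumes "tpmc S E fin fail"
  shows "reach_prob val E fin fail = 0"
proof -
  have "fin \<noteq> fail" using assms by (simp add: tpmc_def)
  then show ?thesis using tpmc_succs_target[OF assms, of fail]
    by (intro closed_reach_prob_eq_0[of "{fail}"]) auto
qed

lemma closed_subset_fail:
  assumes tp: "tpmc S E fin fail" and fail_class: "eq_class S E fin fail fail = {fail}"
    and "C \<subseteq> S" "\<forall>s\<in>C. succs E s \<subseteq> C" "fin \<notin> C"
  shows "C \<subseteq> {fail}"
proof
  fix s assume "s \<in> C"
  then have "equiv_states S E fin fail s fail"
    unfolding equiv_states_def
    using closed_reach_prob_eq_0[OF assms(4,5)] reach_prob_fail[OF tp] by simp
  then show "s \<in> {fail}" using \<open>s \<in> C\<close> \<open>C \<subseteq> S\<close> fail_class by (auto simp: eq_class_def)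
qed

context
  fixes S E fin fail val
  assumes tp: "tpmc S E fin fail" and gp: "graph_preserving S E fin fail val"
begin

lemma reach_within_le_1: "s \<in> S \<Longrightarrow> reach_within val E fin n s \<le> 1"
  using tp gp graph_preserving_succ_pos[OF tp gp]
  by (intro reach_within_le_superharmonic[where f = "\<lambda>_. 1"])
    (auto simp: graph_preserving_def intro: less_imp_le)

lemma reach_within_tendsto_reach_prob:
  "s \<in> S \<Longrightarrow> (\<lambda>n. reach_within val E fin n s) \<longlonglongrightarrow> reach_prob val E fin s"
  unfolding reach_prob_def using reach_within_le_1 graph_preserving_succ_pos[OF tp gp]
  by (intro LIMSEQ_incseq_SUP incseq_reach_within) (auto simp: bdd_above_def less_imp_le)

lemma harmonic_reach_prob: "harmonic S E fin fail val (reach_prob val E fin)"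
  unfolding harmonic_def
proof
  fix s assume s: "s \<in> S - {fin, fail}"
  have "(\<lambda>n. reach_within val E fin (Suc n) s) \<longlonglongrightarrow> reach_prob val E fin s"
    using s by (intro LIMSEQ_Suc reach_within_tendsto_reach_prob) auto
  moreover have "(\<lambda>n. reach_within val E fin (Suc n) s)
      \<longlonglongrightarrow> (\<Sum>t\<in>succs E s. val s t * reach_prob val E fin t)"
    using s tpmc_succs_subset[OF tp]
    by (auto intro!: tendsto_sum tendsto_mult_left reach_within_tendsto_reach_prob)
  ultimately show "(\<Sum>t\<in>succs E s. val s t * reach_prob val E fin t) = reach_prob val E fin s"
    using LIMSEQ_unique by blast
qed

lemma harmonic_max_propagates:
  assumes "harmonic S E fin fail val e" "s \<in> S - {fin, fail}" "\<forall>t\<in>S. e t \<le> e s"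
    and "t \<in> succs E s"
  shows "e t = e s"
proof (rule convex_combination_eq_upper_bound[where w = "val s" and A = "succs E s"])
  show "finite (succs E s)" using tpmc_finite_succs[OF tp] .
  show "\<forall>t\<in>succs E s. 0 < val s t" using graph_preserving_succ_pos[OF tp gp] by blast
  show "sum (val s) (succs E s) = 1" using gp assms(2) by (simp add: graph_preserving_def)
  show "\<forall>t\<in>succs E s. e t \<le> e s" using tpmc_succs_subset[OF tp] assms(3) by blast
  show "(\<Sum>t\<in>succs E s. val s t * e t) = e s" using assms(1,2) by (simp add: harmonic_def)
qed (fact assms(4))

lemma harmonic_nonpos:
  fixes e :: "'a \<Rightarrow> real"
  assumes fail_class: "eq_class S E fin fail fail = {fail}"
    and harm: "harmonic S E fin fail val e" and "e fin \<le> 0" "e fail \<le> 0"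
  shows "s \<in> S \<Longrightarrow> e s \<le> 0"
proof -
  define M where "M = Max (e ` S)"
  have finite: "finite S" and "fin \<in> S" using tp by (auto simp: tpmc_def)
  have le_M: "e t \<le> M" if "t \<in> S" for t
    unfolding M_def using finite that by (intro Max_ge) auto
  have "M \<in> e ` S"
    unfolding M_def using finite \<open>fin \<in> S\<close> by (intro Max_in) auto
  have "M \<le> 0"
  proof (rule ccontr)
    assume "\<not> M \<le> 0"
    define C where "C = {s \<in> S. e s = M}"
    have "C \<noteq> {}" using \<open>M \<in> e ` S\<close> by (auto simp: C_def)
    have "fin \<notin> C" "fail \<notin> C" using assms \<open>\<not> M \<le> 0\<close> by (auto simp: C_def)
    have "succs E s \<subseteq> C" if "s \<in> C" for s
    proof
      fix t assume t: "t \<in> succs E s"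
      have "s \<in> S - {fin, fail}" using that \<open>fin \<notin> C\<close> \<open>fail \<notin> C\<close> by (auto simp: C_def)
      then have "e t = e s"
        using harmonic_max_propagates[OF harm _ _ t] le_M that by (auto simp: C_def)
      then show "t \<in> C" using that t tpmc_succs_subset[OF tp] by (auto simp: C_def)
    qed
    then have "C \<subseteq> {fail}"
      using closed_subset_fail[OF tp fail_class] \<open>fin \<notin> C\<close> by (auto simp: C_def)
    then show False using \<open>C \<noteq> {}\<close> \<open>fail \<notin> C\<close> by blast
  qed
  then show "s \<in> S \<Longrightarrow> e s \<le> 0" using le_M by fastforce
qed

lemma reach_prob_eq_harmonic:
  fixes f :: "'a \<Rightarrow> real"
  assumes fail_class: "eq_class S E fin fail fail = {fail}"
    and "f fin = 1" "f fail = 0" "\<forall>s\<in>S. 0 \<le> f s" and harm: "harmonic S E fin fail val f"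
    and "s \<in> S"
  shows "reach_prob val E fin s = f s"
proof -
  have nonneg: "0 \<le> val u t" if "t \<in> succs E u" for u t
    using graph_preserving_succ_pos[OF tp gp that] by simp
  have "reach_within val E fin n s \<le> f s" for n
  proof (rule reach_within_le_superharmonic[OF nonneg tp])
    show "s' \<in> S - {fin, fail} \<Longrightarrow> (\<Sum>t\<in>succs E s'. val s' t * f t) \<le> f s'" for s'
      using harm by (simp add: harmonic_def)
  qed (use assms in auto)
  then have "reach_prob val E fin s \<le> f s"
    unfolding reach_prob_def by (rule cSUP_least[rotated]) simp
  have "harmonic S E fin fail val (\<lambda>s. f s - reach_prob val E fin s)"
    using harm harmonic_reach_prob by (rule harmonic_diff)
  moreover have "f fin - reach_prob val E fin fin \<le> 0" "f fail - reach_prob val E fin fail \<le> 0"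
    by (simp_all add: assms(2,3) reach_prob_fin reach_prob_fail[OF tp])
  ultimately have "f s - reach_prob val E fin s \<le> 0"
    using harmonic_nonpos[OF fail_class] \<open>s \<in> S\<close> by blast
  with \<open>reach_prob val E fin s \<le> f s\<close> show ?thesis by linarith
qed

end

lemma level_eq:
  assumes "\<forall>i\<le>m. \<forall>j\<le>m. i \<noteq> j \<longrightarrow> Sp i \<inter> Sp j = {}" "s \<in> Sp j" "j \<le> m"
  shows "level Sp m s = j"
  unfolding level_def using assms by (intro the_equality) blast+

lemma
  assumes "equiv_partition S E fin fail Sp m"
  shows equiv_partition_disjoint: "\<forall>i\<le>m. \<forall>j\<le>m. i \<noteq> j \<longrightarrow> Sp i \<inter> Sp j = {}"
    and equiv_partition_cover: "(\<Union>i \<le> m. Sp i) = S"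
    and equiv_partition_fail: "Sp 0 = {fail}"
    and equiv_partition_fin: "Sp m = {fin}"
    and equiv_partition_succs: "j \<le> m \<Longrightarrow> u \<in> Sp j \<Longrightarrow>
          (\<exists>i k. i < j \<and> j < k \<and> k \<le> m \<and> succs E u \<inter> Sp i \<noteq> {} \<and> succs E u \<inter> Sp k \<noteq> {})
          \<or> succs E u \<subseteq> Sp j"
  using assms unfolding equiv_partition_def by blast+

lemma equiv_partition_pos:
  assumes "tpmc S E fin fail" "equiv_partition S E fin fail Sp m"
  shows "0 < m"
  using equiv_partition_fail[OF assms(2)] equiv_partition_fin[OF assms(2)] assms(1)
  by (cases m) (auto simp: tpmc_def)

lemma equiv_partition_harmonic_valuation:
  assumes tp: "tpmc S E fin fail"
    and two_succs: "\<forall>s \<in> S - {fin, fail}. card (succs E s) = 2"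
    and part: "equiv_partition S E fin fail Sp m"
  shows "\<exists>val. graph_preserving S E fin fail val
           \<and> harmonic S E fin fail val (\<lambda>s. real (level Sp m s) / real m)"
proof -
  define f where "f s = real (level Sp m s) / real m" for s
  have f: "f s = real j / real m" if "s \<in> Sp j" "j \<le> m" for s j
    using level_eq[OF equiv_partition_disjoint[OF part] that] by (simp add: f_def)
  have "0 < m" using equiv_partition_pos[OF tp part] .
  have "\<exists>w. (\<forall>t\<in>succs E u. 0 < w t) \<and> sum w (succs E u) = 1 \<and> (\<Sum>t\<in>succs E u. w t * f t) = f u"
    if u: "u \<in> S - {fin, fail}" for u
  proof (rule exists_weights_with_mean)
    show "card (succs E u) = 2" using two_succs u by blast
    obtain j where j: "j \<le> m" "u \<in> Sp j" using equiv_partition_cover[OF part] u by blast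
    from equiv_partition_succs[OF part j]
    show "(\<exists>a\<in>succs E u. \<exists>b\<in>succs E u. f a < f u \<and> f u < f b) \<or> (\<forall>t\<in>succs E u. f t = f u)"
    proof
      assume "\<exists>i k. i < j \<and> j < k \<and> k \<le> m \<and> succs E u \<inter> Sp i \<noteq> {} \<and> succs E u \<inter> Sp k \<noteq> {}"
      then obtain i k a b where "i < j" "j < k" "k \<le> m" "a \<in> succs E u" "a \<in> Sp i"
        "b \<in> succs E u" "b \<in> Sp k"
        by blast
      moreover from this have "f a < f u" "f u < f b"
        using f j \<open>0 < m\<close> by (simp_all add: divide_strict_right_mono)
      ultimately show ?thesis by blast
    next
      assume "succs E u \<subseteq> Sp j"
      then show ?thesis using f j by auto
    qed
  qed
  then obtain val where "\<forall>u\<in>S - {fin, fail}. (\<forall>t\<in>succs E u. 0 < val u t)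
      \<and> sum (val u) (succs E u) = 1 \<and> (\<Sum>t\<in>succs E u. val u t * f t) = f u"
    by metis
  then show ?thesis unfolding f_def graph_preserving_def harmonic_def by blast
qed

theorem lemma18:
  fixes S :: "'a set" and E :: "('a \<times> 'a) set" and fin fail :: 'a
    and Sp :: "nat \<Rightarrow> 'a set" and m :: nat
  assumes "tpmc S E fin fail"
    and "standing_assms S E fin fail"
    and "equiv_partition S E fin fail Sp m"
  shows "\<exists>val. graph_preserving S E fin fail val \<and>
           (\<forall>i j. i < j \<and> j \<le> m \<longrightarrow>
              (\<forall>si \<in> Sp i. \<forall>sj \<in> Sp j. reach_prob val E fin si < reach_prob val E fin sj))"
proof -
  note part = assms(3)
  have fail_class: "eq_class S E fin fail fail = {fail}"
    and two_succs: "\<forall>s \<in> S - {fin, fail}. card (succs E s) = 2"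
    using assms(2) by (simp_all add: standing_assms_def)
  define f where "f s = real (level Sp m s) / real m" for s
  obtain val where gp: "graph_preserving S E fin fail val" and harm: "harmonic S E fin fail val f"
    using equiv_partition_harmonic_valuation[OF assms(1) two_succs part] unfolding f_def by blast
  have f: "f s = real j / real m" if "s \<in> Sp j" "j \<le> m" for s j
    using level_eq[OF equiv_partition_disjoint[OF part] that] by (simp add: f_def)
  have "0 < m" using equiv_partition_pos[OF assms(1) part] .
  have "f fin = 1" "f fail = 0"
    using f[of fin m] f[of fail 0] equiv_partition_fin[OF part] equiv_partition_fail[OF part] \<open>0 < m\<close>
    by auto
  have reach_prob_eq_f: "reach_prob val E fin s = f s" if "s \<in> S" for s
    using reach_prob_eq_harmonic[OF assms(1) gp fail_class \<open>f fin = 1\<close> \<open>f fail = 0\<close> _ harm that]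
    by (simp add: f_def)
  show ?thesis
  proof (intro exI conjI allI impI ballI)
    fix i j si sj assume "i < j \<and> j \<le> m" "si \<in> Sp i" "sj \<in> Sp j"
    moreover from this have "si \<in> S" "sj \<in> S" using equiv_partition_cover[OF part] by auto
    ultimately show "reach_prob val E fin si < reach_prob val E fin sj"
      using reach_prob_eq_f f \<open>0 < m\<close> by (simp add: divide_strict_right_mono)
  qed (fact gp)
qed

end
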